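(* Let $(J,[\cdot,\cdot],\alpha,B)$ be a finite-dimensional multiplicative metric Hom-Jacobi-Jordan algebra. Then (1) the center $\mathfrak Z(J)$ is an ideal of $J$; (2) $\mathfrak Z(J)=[J,J]^{\perp}$, and consequently $\dim\mathfrak Z(J)+\dim[J,J]=\dim J$.
   Context: A Hom-Jacobi-Jordan algebra is $(J,[\cdot,\cdot],\alpha)$ with $[\cdot,\cdot]$ symmetric bilinear, $\alpha$ linear and $[\alpha(x),[y,z]]+[\alpha(y),[z,x]]+[\alpha(z),[x,y]]=0$ for all $x,y,z$; it is multiplicative if $\alpha([x,y])=[\alpha(x),\alpha(y)]$. A metric Hom-Jacobi-Jordan algebra is $(J,[\cdot,\cdot],\alpha,B)$ with $B$ a nondegenerate symmetric bilinear form such that $B(x,[y,z])=B([x,y],z)$ and $B(\alpha(x),y)=B(x,\alpha(y))$ for all $x,y,z$. An ideal is a subspace $I$ with $[I,J]\subset I$ and $\alpha(I)\subset I$. The center is $\mathfrak Z(J)=\{x\in J: [x,y]=0\ \forall y\in J\}$; $[J,J]$ is the span of all $[x,y]$; for a subspace $W$, $W^\perp=\{x: B(x,w)=0\ \forall w\in W\}$. *)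

theory Defs
  imports Complex_Main
begin

definition bilinear_form_on ::
  "('k::field \<Rightarrow> 'v::ab_group_add \<Rightarrow> 'v) \<Rightarrow> ('v \<Rightarrow> 'v \<Rightarrow> 'k) \<Rightarrow> bool" where
  "bilinear_form_on scale B \<longleftrightarrow>
     (\<forall>x y z. B (x + y) z = B x z + B y z) \<and>
     (\<forall>x y z. B x (y + z) = B x y + B x z) \<and>
     (\<forall>c x y. B (scale c x) y = c * B x y) \<and>
     (\<forall>c x y. B x (scale c y) = c * B x y)"

definition bilinear_map_on ::
  "('k::field \<Rightarrow> 'v::ab_group_add \<Rightarrow> 'v) \<Rightarrow> ('v \<Rightarrow> 'v \<Rightarrow> 'v) \<Rightarrow> bool" where
  "bilinear_map_on scale br \<longleftrightarrow>
     (\<forall>x y z. br (x + y) z = br x z + br y z) \<and>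
     (\<forall>x y z. br x (y + z) = br x y + br x z) \<and>
     (\<forall>c x y. br (scale c x) y = scale c (br x y)) \<and>
     (\<forall>c x y. br x (scale c y) = scale c (br x y))"

definition hom_jacobi_jordan ::
  "('k::field \<Rightarrow> 'v::ab_group_add \<Rightarrow> 'v) \<Rightarrow> ('v \<Rightarrow> 'v \<Rightarrow> 'v) \<Rightarrow> ('v \<Rightarrow> 'v) \<Rightarrow> bool" where
  "hom_jacobi_jordan scale br \<alpha> \<longleftrightarrow>
     Vector_Spaces.vector_space scale \<and>
     bilinear_map_on scale br \<and>
     (\<forall>x y. br x y = br y x) \<and>
     Vector_Spaces.linear scale scale \<alpha> \<and>
     (\<forall>x y z. br (\<alpha> x) (br y z) + br (\<alpha> y) (br z x) + br (\<alpha> z) (br x y) = 0)"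

definition multiplicative :: "('v \<Rightarrow> 'v \<Rightarrow> 'v) \<Rightarrow> ('v \<Rightarrow> 'v) \<Rightarrow> bool" where
  "multiplicative br \<alpha> \<longleftrightarrow> (\<forall>x y. \<alpha> (br x y) = br (\<alpha> x) (\<alpha> y))"

definition metric_hom_jacobi_jordan ::
  "('k::field \<Rightarrow> 'v::ab_group_add \<Rightarrow> 'v) \<Rightarrow> ('v \<Rightarrow> 'v \<Rightarrow> 'v) \<Rightarrow> ('v \<Rightarrow> 'v)
     \<Rightarrow> ('v \<Rightarrow> 'v \<Rightarrow> 'k) \<Rightarrow> bool" where
  "metric_hom_jacobi_jordan scale br \<alpha> B \<longleftrightarrow>
     hom_jacobi_jordan scale br \<alpha> \<and>
     bilinear_form_on scale B \<and>
     (\<forall>x y. B x y = B y x) \<and>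
     (\<forall>x. (\<forall>y. B x y = 0) \<longrightarrow> x = 0) \<and>
     (\<forall>x y z. B x (br y z) = B (br x y) z) \<and>
     (\<forall>x y. B (\<alpha> x) y = B x (\<alpha> y))"

definition finite_dimensional :: "('k::field \<Rightarrow> 'v::ab_group_add \<Rightarrow> 'v) \<Rightarrow> bool" where
  "finite_dimensional scale \<longleftrightarrow> (\<exists>S. finite S \<and> module.span scale S = UNIV)"

definition hjj_ideal ::
  "('k::field \<Rightarrow> 'v::ab_group_add \<Rightarrow> 'v) \<Rightarrow> ('v \<Rightarrow> 'v \<Rightarrow> 'v) \<Rightarrow> ('v \<Rightarrow> 'v) \<Rightarrow> 'v set \<Rightarrow> bool" where
  "hjj_ideal scale br \<alpha> I \<longleftrightarrow>
     module.subspace scale I \<and> (\<forall>x\<in>I. \<forall>y. br x y \<in> I) \<and> \<alpha> ` I \<subseteq> I"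

definition center :: "('v::zero \<Rightarrow> 'v \<Rightarrow> 'v) \<Rightarrow> 'v set" where
  "center br = {x. \<forall>y. br x y = 0}"

definition derived ::
  "('k::field \<Rightarrow> 'v::ab_group_add \<Rightarrow> 'v) \<Rightarrow> ('v \<Rightarrow> 'v \<Rightarrow> 'v) \<Rightarrow> 'v set" where
  "derived scale br = module.span scale {br x y | x y. True}"

definition orth :: "('v \<Rightarrow> 'v \<Rightarrow> 'k::zero) \<Rightarrow> 'v set \<Rightarrow> 'v set" where
  "orth B W = {x. \<forall>w\<in>W. B x w = 0}"

end

theory Submission
  imports Defs
begin

text \<open>By invariance, \<open>B x [y,z] = B [x,y] z\<close>, so \<open>x\<close> is orthogonal to all brackets iff
  \<open>B [x,y] z = 0\<close> for all \<open>y, z\<close>, i.e. (by nondegeneracy) iff \<open>x\<close> is central; this gives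
  \<open>\<Z>(J) = [J,J]\<^sup>\<bottom>\<close>. The dimension formula is then the general fact
  \<open>dim W\<^sup>\<bottom> + dim W = dim J\<close> for a nondegenerate form on a finite-dimensional space.
  Finally \<open>\<alpha>\<close> preserves the centre because \<open>B [\<alpha> x, y] z = B x [\<alpha> y, \<alpha> z]\<close> by invariance,
  self-adjointness and multiplicativity.\<close>

locale bilinear_form = vector_space scale
  for scale :: "'k::field \<Rightarrow> 'v::ab_group_add \<Rightarrow> 'v" (infixr \<open>*s\<close> 75) +
  fixes B :: "'v \<Rightarrow> 'v \<Rightarrow> 'k"
  assumes bilinear: "bilinear_form_on scale B"
begin

lemma B_add_left: "B (x + y) z = B x z + B y z"
  and B_add_right: "B x (y + z) = B x y + B x z"
  and B_scale_left: "B (c *s x) y = c * B x y"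
  and B_scale_right: "B x (c *s y) = c * B x y"
  using bilinear unfolding bilinear_form_on_def by blast+

lemma B_zero_left [simp]: "B 0 y = 0"
  using B_scale_left[of 0 0 y] by simp

lemma B_zero_right [simp]: "B x 0 = 0"
  using B_scale_right[of x 0 0] by simp

lemma B_diff_left: "B (x - y) z = B x z - B y z"
  using B_add_left[of "x - y" y z] by simp

lemma subspace_orth: "subspace (orth B W)"
  unfolding subspace_def orth_def by (simp add: B_add_left B_scale_left)

lemma orth_span [simp]: "orth B (span W) = orth B W"
proof
  show "orth B (span W) \<subseteq> orth B W"
    using span_superset unfolding orth_def by blast
  show "orth B W \<subseteq> orth B (span W)"
  proof
    fix x assume "x \<in> orth B W"
    then have "span W \<subseteq> {w. B x w = 0}"
      by (intro span_minimal) (auto simp: orth_def subspace_def B_add_right B_scale_right)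
    then show "x \<in> orth B (span W)"
      unfolding orth_def by blast
  qed
qed

end

locale nondegenerate_form = bilinear_form +
  assumes nondegenerate: "(\<And>y. B x y = 0) \<Longrightarrow> x = 0"
begin

lemma orth_UNIV: "orth B UNIV = {0}"
  using nondegenerate by (auto simp: orth_def)

end

locale nondegenerate_form_with_basis =
  nondegenerate_form scale B + finite_dimensional_vector_space scale Basis
  for scale :: "'k::field \<Rightarrow> 'v::ab_group_add \<Rightarrow> 'v" (infixr \<open>*s\<close> 75)
    and B :: "'v \<Rightarrow> 'v \<Rightarrow> 'k" and Basis :: "'v set"
begin

text \<open>The isomorphism \<open>x \<mapsto> B x \<cdot>\<close> of \<open>J\<close> with its dual, followed by the identification
  of the dual with \<open>J\<close> that sends the dual basis of \<open>Basis\<close> to \<open>Basis\<close>.\<close>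
definition coord_map :: "'v \<Rightarrow> 'v" where
  "coord_map x = (\<Sum>v\<in>Basis. B x v *s v)"

lemma sum_scale_Basis_eq_iff:
  "(\<Sum>v\<in>Basis. c v *s v) = (\<Sum>v\<in>Basis. d v *s v) \<longleftrightarrow> (\<forall>v\<in>Basis. c v = d v)"
proof
  assume "(\<Sum>v\<in>Basis. c v *s v) = (\<Sum>v\<in>Basis. d v *s v)"
  then have "(\<Sum>v\<in>Basis. (c v - d v) *s v) = 0"
    by (simp add: scale_left_diff_distrib sum_subtractf)
  then show "\<forall>v\<in>Basis. c v = d v"
    using independent_Basis unfolding independent_explicit by auto
qed simp

lemma coord_map_eq_iff: "coord_map x = coord_map y \<longleftrightarrow> (\<forall>v\<in>Basis. B x v = B y v)"
  unfolding coord_map_def by (rule sum_scale_Basis_eq_iff)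

lemma linear_coord_map: "Vector_Spaces.linear scale scale coord_map"
  unfolding Vector_Spaces.linear_iff
  by (simp add: vector_space_axioms coord_map_def B_add_left B_scale_left
      scale_left_distrib sum.distrib scale_sum_right)

lemma inj_coord_map: "inj coord_map"
proof (rule injI)
  fix x y assume "coord_map x = coord_map y"
  then have "x - y \<in> orth B Basis"
    by (simp add: coord_map_eq_iff orth_def B_diff_left)
  then have "x - y \<in> orth B (span Basis)"
    by (simp only: orth_span)
  then show "x = y"
    by (simp add: span_Basis orth_UNIV)
qed

lemma surj_coord_map: "surj coord_map"
  by (rule linear_inj_imp_surj[OF linear_coord_map inj_coord_map])

lemma coord_map_orth:
  assumes "Bw \<subseteq> Basis"
  shows "coord_map ` orth B Bw = span (Basis - Bw)"
proof
  show "coord_map ` orth B Bw \<subseteq> span (Basis - Bw)"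
  proof clarify
    fix x assume "x \<in> orth B Bw"
    then have "coord_map x = (\<Sum>v\<in>Basis - Bw. B x v *s v)"
      unfolding coord_map_def orth_def
      by (intro sum.mono_neutral_right) (auto simp: finite_Basis)
    also have "\<dots> \<in> span (Basis - Bw)"
      by (intro span_sum span_scale span_base) simp
    finally show "coord_map x \<in> span (Basis - Bw)" .
  qed
  show "span (Basis - Bw) \<subseteq> coord_map ` orth B Bw"
  proof
    fix y assume "y \<in> span (Basis - Bw)"
    then obtain u where u: "y = (\<Sum>v\<in>Basis - Bw. u v *s v)"
      using span_finite[of "Basis - Bw"] finite_Basis by auto
    define c where "c v = (if v \<in> Bw then 0 else u v)" for v
    have y: "y = (\<Sum>v\<in>Basis. c v *s v)"
      unfolding u c_def by (intro sum.mono_neutral_cong_left) (auto simp: finite_Basis)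
    obtain x where x: "y = coord_map x"
      using surj_coord_map by (metis surjD)
    then have "\<forall>v\<in>Basis. B x v = c v"
      using y by (simp add: coord_map_def sum_scale_Basis_eq_iff)
    then have "x \<in> orth B Bw"
      using assms by (auto simp: orth_def c_def)
    then show "y \<in> coord_map ` orth B Bw"
      using x by blast
  qed
qed

lemma dim_orth_subset_Basis:
  assumes "Bw \<subseteq> Basis"
  shows "dim (orth B Bw) = card Basis - card Bw"
proof -
  interpret finite_dimensional_vector_space_pair_1 scale Basis scale ..
  have "dim (orth B Bw) = dim (coord_map ` orth B Bw)"
    using dim_image_eq[OF linear_coord_map] inj_coord_map by (metis inj_on_subset subset_UNIV)
  also have "\<dots> = card (Basis - Bw)"
    using assms coord_map_orth independent_Basis
    by (metis Diff_subset dim_span_eq_card_independent independent_mono)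
  also have "\<dots> = card Basis - card Bw"
    using assms finite_Basis by (meson card_Diff_subset finite_subset)
  finally show ?thesis .
qed

end

context nondegenerate_form
begin

lemma dim_orth_add_dim:
  assumes "finite_dimensional scale"
  shows "dim (orth B W) + dim W = dim UNIV"
proof -
  obtain Bw where Bw: "Bw \<subseteq> W" "independent Bw" "W \<subseteq> span Bw" "card Bw = dim W"
    using basis_exists[of W] by blast
  obtain Basis where Basis: "Bw \<subseteq> Basis" "independent Basis" "UNIV \<subseteq> span Basis"
    by (rule maximal_independent_subset_extend[OF subset_UNIV Bw(2)])
  obtain S where "finite S" "span S = UNIV"
    using assms unfolding finite_dimensional_def by blast
  then have "finite Basis"
    using independent_span_bound[OF _ Basis(2)] by simp
  moreover have "span Basis = UNIV"
    using Basis(3) by blast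
  ultimately interpret nondegenerate_form_with_basis scale B Basis
    using Basis(2) by unfold_locales
  have "span W = span Bw"
    using Bw(1,3) span_superset unfolding span_eq by blast
  then have "orth B W = orth B Bw"
    by (metis orth_span)
  then have "dim (orth B W) = card Basis - card Bw"
    using dim_orth_subset_Basis[OF Basis(1)] by simp
  moreover have "card Bw \<le> card Basis"
    using Basis(1) finite_Basis by (rule card_mono[rotated])
  ultimately show ?thesis
    using Bw(4) by simp
qed

end

lemma metric_hjj_nondegenerate_form:
  assumes "metric_hom_jacobi_jordan scale br \<alpha> B"
  shows "nondegenerate_form scale B"
  using assms
  unfolding metric_hom_jacobi_jordan_def hom_jacobi_jordan_def
    nondegenerate_form_def nondegenerate_form_axioms_def bilinear_form_def bilinear_form_axioms_def
  by blast

lemma center_eq_orth_derived: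
  assumes metric: "metric_hom_jacobi_jordan scale br \<alpha> B"
  shows "center br = orth B (derived scale br)"
proof -
  interpret nondegenerate_form scale B
    using metric by (rule metric_hjj_nondegenerate_form)
  have invariant: "B x (br y z) = B (br x y) z" for x y z
    using metric unfolding metric_hom_jacobi_jordan_def by blast
  have "x \<in> orth B {br y z | y z. True} \<longleftrightarrow> x \<in> center br" for x
  proof -
    have "x \<in> orth B {br y z | y z. True} \<longleftrightarrow> (\<forall>y z. B (br x y) z = 0)"
      unfolding orth_def invariant[symmetric] by blast
    also have "\<dots> \<longleftrightarrow> (\<forall>y. br x y = 0)"
      using nondegenerate B_zero_left by metis
    finally show ?thesis
      by (simp add: center_def)
  qed
  then show ?thesis
    unfolding derived_def orth_span by blast
qed

lemma twist_image_center_subset: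
  assumes metric: "metric_hom_jacobi_jordan scale br \<alpha> B"
    and mult: "multiplicative br \<alpha>"
  shows "\<alpha> ` center br \<subseteq> center br"
proof clarify
  interpret nondegenerate_form scale B
    using metric by (rule metric_hjj_nondegenerate_form)
  have invariant: "B x (br y z) = B (br x y) z"
    and self_adjoint: "B (\<alpha> x) y = B x (\<alpha> y)" for x y z
    using metric unfolding metric_hom_jacobi_jordan_def by blast+
  fix x assume x: "x \<in> center br"
  have "B (br (\<alpha> x) y) z = 0" for y z
  proof -
    have "B (br (\<alpha> x) y) z = B x (\<alpha> (br y z))"
      by (simp add: self_adjoint flip: invariant)
    also have "\<dots> = B (br x (\<alpha> y)) (\<alpha> z)"
      using mult by (simp add: multiplicative_def invariant)
    also have "\<dots> = 0"
      using x by (simp add: center_def)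
    finally show ?thesis .
  qed
  then show "\<alpha> x \<in> center br"
    using nondegenerate by (simp add: center_def)
qed

lemma hjj_ideal_center:
  assumes metric: "metric_hom_jacobi_jordan scale br \<alpha> B"
    and mult: "multiplicative br \<alpha>"
  shows "hjj_ideal scale br \<alpha> (center br)"
proof -
  interpret nondegenerate_form scale B
    using metric by (rule metric_hjj_nondegenerate_form)
  have "subspace (center br)"
    using center_eq_orth_derived[OF metric] subspace_orth by simp
  moreover have "br x y \<in> center br" if "x \<in> center br" for x y
    using that subspace_0[OF \<open>subspace (center br)\<close>] by (simp add: center_def)
  ultimately show ?thesis
    unfolding hjj_ideal_def using twist_image_center_subset[OF metric mult] by blast
qed

theorem proposition6p3:
  fixes scale :: "'k::field \<Rightarrow> 'v::ab_group_add \<Rightarrow> 'v"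
    and br :: "'v \<Rightarrow> 'v \<Rightarrow> 'v" and \<alpha> :: "'v \<Rightarrow> 'v" and B :: "'v \<Rightarrow> 'v \<Rightarrow> 'k"
  assumes "metric_hom_jacobi_jordan scale br \<alpha> B"
    and "multiplicative br \<alpha>"
    and "finite_dimensional scale"
  shows "hjj_ideal scale br \<alpha> (center br)
         \<and> center br = orth B (derived scale br)
         \<and> vector_space.dim scale (center br) + vector_space.dim scale (derived scale br)
           = vector_space.dim scale (UNIV :: 'v set)"
proof -
  interpret nondegenerate_form scale B
    using assms(1) by (rule metric_hjj_nondegenerate_form)
  have center: "center br = orth B (derived scale br)"
    using assms(1) by (rule center_eq_orth_derived)
  show ?thesis
    using hjj_ideal_center[OF assms(1,2)] center dim_orth_add_dim[OF assms(3)] by simp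
qed

end
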